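(* Let $R$ be a commutative domain, $B=R(t,\sigma,H,J)$, assume $\sigma^n=\mathrm{id}_R$ and let $\mathcal O$ be a $\sigma$-orbit in $\operatorname{Maxspec}(R)$ of size $n$ containing no breaks. Let $M$ be a simple $B$-module which is an $R$-weight module with $\operatorname{Supp}_R(M)\subseteq\mathcal O$. Then for each $\mathfrak m\in\mathcal O$, $M_{\mathfrak m}$ is a simple $\Lambda_n/(\mathfrak m)$-module, and for all $i\in\mathbb Z$, $M_{\sigma^i(\mathfrak m)}\cong{}^{\sigma^i}M_{\mathfrak m}$ as $\Lambda_n/(\sigma^i(\mathfrak m))$-modules.
   Context: $\Bbbk$ is a field; all algebras are associative unital $\Bbbk$-algebras. For an algebra $R$ and $\sigma\in\operatorname{Aut}_\Bbbk(R)$, $R[t,t^{-1};\sigma]$ is the skew Laurent ring: generated over $R$ by $t,t^{-1}$ with $tt^{-1}=t^{-1}t=1$ and $t^{\pm1}r=\sigma^{\pm1}(r)t^{\pm1}$ for $r\in R$. Given two-sided ideals $H,J$ of $R$, set $I^{(0)}=R$, $I^{(n)}=J\sigma(J)\cdots\sigma^{n-1}(J)$ for $n\ge1$, and $I^{(n)}=\sigma^{-1}(H)\sigma^{-2}(H)\cdots\sigma^{n}(H)$ for $n\le-1$; it is assumed throughout that $I^{(n)}\neq0$ for all $n\in\mathbb Z$. The Bell–Rogalski (BR) algebra is $R(t,\sigma,H,J)=\bigoplus_{n\in\mathbb Z}I^{(n)}t^n\subseteq R[t,t^{-1};\sigma]$; $B_k=I^{(k)}t^k$. For $R$ commutative,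 $\mathcal S(B)=\{\mathfrak p\in\operatorname{Spec}(R):\mathfrak p\supseteq HJ\}$; a maximal ideal $\mathfrak m$ is a break if $\sigma(\mathfrak m)\in\mathcal S(B)$. A left $B$-module $M$ is an $R$-weight module if $M=\bigoplus_{\mathfrak m\in\operatorname{Maxspec}(R)}M_{\mathfrak m}$, $M_{\mathfrak m}=\{v:\mathfrak mv=0\}$, each $\dim_{R/\mathfrak m}M_{\mathfrak m}<\infty$. $\sigma$-orbits are orbits of $k\cdot\mathfrak m=\sigma^k(\mathfrak m)$. With $\sigma^n=\mathrm{id}$: $\Lambda_n=\bigoplus_{k\in\mathbb Z}B_{kn}$ (the $n$-th Veronese subalgebra); for $\mathfrak m\in\mathcal O$, $(\mathfrak m)=\mathfrak m\Lambda_n=\Lambda_n\mathfrak m$ is a two-sided ideal of $\Lambda_n$; $\sigma$ acts on $\Lambda_n$ by $\sigma(at^{kn})=\sigma(a)t^{kn}$, inducing $\Lambda_n/(\mathfrak m)\cong\Lambda_n/(\sigma^i(\mathfrak m))$. For a $\Lambda_n/(\mathfrak m)$-module $N$, ${}^{\sigma^i}N$ is the $\Lambda_n/(\sigma^i(\mathfrak m))$-module equal to $N$ as a set (elements written ${}^{\sigma^i}v$) with action $\lambda\cdot{}^{\sigma^i}v={}^{\sigma^i}(\sigma^{-i}(\lambda)v)$. *)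

theory Defs
  imports Main
begin

definition is_ideal :: "'r::comm_ring_1 set \<Rightarrow> bool" where
  "is_ideal I \<longleftrightarrow> 0 \<in> I \<and> (\<forall>x\<in>I. \<forall>y\<in>I. x + y \<in> I) \<and> (\<forall>r. \<forall>x\<in>I. r * x \<in> I)"

definition iprod :: "'r::comm_ring_1 set \<Rightarrow> 'r set \<Rightarrow> 'r set" where
  "iprod A B = \<Inter>{I. is_ideal I \<and> {a * b | a b. a \<in> A \<and> b \<in> B} \<subseteq> I}"

definition is_maximal :: "'r::comm_ring_1 set \<Rightarrow> bool" where
  "is_maximal m \<longleftrightarrow> is_ideal m \<and> m \<noteq> UNIV \<and>
     (\<forall>I. is_ideal I \<and> m \<subseteq> I \<longrightarrow> I = m \<or> I = UNIV)"

definition Maxspec :: "'r::comm_ring_1 set set" where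
  "Maxspec = {m. is_maximal m}"

definition is_prime_ideal :: "'r::comm_ring_1 set \<Rightarrow> bool" where
  "is_prime_ideal p \<longleftrightarrow> is_ideal p \<and> p \<noteq> UNIV \<and> (\<forall>a b. a * b \<in> p \<longrightarrow> a \<in> p \<or> b \<in> p)"

definition ring_aut :: "('r::comm_ring_1 \<Rightarrow> 'r) \<Rightarrow> bool" where
  "ring_aut \<sigma> \<longleftrightarrow> bij \<sigma> \<and> (\<forall>a b. \<sigma> (a + b) = \<sigma> a + \<sigma> b) \<and>
     (\<forall>a b. \<sigma> (a * b) = \<sigma> a * \<sigma> b) \<and> \<sigma> 1 = 1"

definition spow :: "('r \<Rightarrow> 'r) \<Rightarrow> int \<Rightarrow> 'r \<Rightarrow> 'r" where
  "spow \<sigma> k = (if k \<ge> 0 then \<sigma> ^^ nat k else inv \<sigma> ^^ nat (- k))"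

primrec Jpow :: "('r::comm_ring_1 \<Rightarrow> 'r) \<Rightarrow> 'r set \<Rightarrow> nat \<Rightarrow> 'r set" where
  "Jpow \<sigma> J 0 = UNIV"
| "Jpow \<sigma> J (Suc m) = iprod (Jpow \<sigma> J m) (spow \<sigma> (int m) ` J)"

primrec Hpow :: "('r::comm_ring_1 \<Rightarrow> 'r) \<Rightarrow> 'r set \<Rightarrow> nat \<Rightarrow> 'r set" where
  "Hpow \<sigma> H 0 = UNIV"
| "Hpow \<sigma> H (Suc m) = iprod (Hpow \<sigma> H m) (spow \<sigma> (- int (Suc m)) ` H)"

text \<open>I^(0)=R, I^(n)=J s(J)...s^(n-1)(J) (n>=1), I^(n)=s^-1(H)...s^n(H) (n<=-1).\<close>
definition Iseq :: "('r::comm_ring_1 \<Rightarrow> 'r) \<Rightarrow> 'r set \<Rightarrow> 'r set \<Rightarrow> int \<Rightarrow> 'r set" where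
  "Iseq \<sigma> H J k = (if k \<ge> 0 then Jpow \<sigma> J (nat k) else Hpow \<sigma> H (nat (- k)))"

text \<open>An element sum_k f(k) t^k is represented by its coefficient function f :: int => 'r
  (finitely supported).\<close>

definition lconst :: "'r::comm_ring_1 \<Rightarrow> int \<Rightarrow> 'r" where
  "lconst a = (\<lambda>k. if k = 0 then a else 0)"

definition ladd :: "(int \<Rightarrow> 'r::comm_ring_1) \<Rightarrow> (int \<Rightarrow> 'r) \<Rightarrow> int \<Rightarrow> 'r" where
  "ladd f g = (\<lambda>k. f k + g k)"

text \<open>(f t^k)(g t^l) = f sigma^k(g) t^(k+l).\<close>
definition lmult :: "('r::comm_ring_1 \<Rightarrow> 'r) \<Rightarrow> (int \<Rightarrow> 'r) \<Rightarrow> (int \<Rightarrow> 'r) \<Rightarrow> int \<Rightarrow> 'r" where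
  "lmult \<sigma> f g = (\<lambda>n. \<Sum>k\<in>{k. f k \<noteq> 0}. f k * spow \<sigma> k (g (n - k)))"

definition BR :: "('r::comm_ring_1 \<Rightarrow> 'r) \<Rightarrow> 'r set \<Rightarrow> 'r set \<Rightarrow> (int \<Rightarrow> 'r) set" where
  "BR \<sigma> H J = {f. finite {k. f k \<noteq> 0} \<and> (\<forall>k. f k \<in> Iseq \<sigma> H J k)}"

definition SB :: "'r::comm_ring_1 set \<Rightarrow> 'r set \<Rightarrow> 'r set set" where
  "SB H J = {p. is_prime_ideal p \<and> iprod H J \<subseteq> p}"

definition is_break :: "('r::comm_ring_1 \<Rightarrow> 'r) \<Rightarrow> 'r set \<Rightarrow> 'r set \<Rightarrow> 'r set \<Rightarrow> bool" where
  "is_break \<sigma> H J m \<longleftrightarrow> m \<in> Maxspec \<and> \<sigma> ` m \<in> SB H J"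

definition is_sigma_orbit :: "('r::comm_ring_1 \<Rightarrow> 'r) \<Rightarrow> 'r set set \<Rightarrow> bool" where
  "is_sigma_orbit \<sigma> Orb \<longleftrightarrow> (\<exists>m \<in> Maxspec. Orb = {spow \<sigma> k ` m | k. True})"

text \<open>A left B-module: abelian group 'm with an action act (only its values on B matter).\<close>
definition is_B_module :: "('r::comm_ring_1 \<Rightarrow> 'r) \<Rightarrow> 'r set \<Rightarrow> 'r set \<Rightarrow>
    ((int \<Rightarrow> 'r) \<Rightarrow> 'm::ab_group_add \<Rightarrow> 'm) \<Rightarrow> bool" where
  "is_B_module \<sigma> H J act \<longleftrightarrow>
     (\<forall>f\<in>BR \<sigma> H J. \<forall>v w. act f (v + w) = act f v + act f w) \<and>
     (\<forall>f\<in>BR \<sigma> H J. \<forall>g\<in>BR \<sigma> H J. \<forall>v. act (ladd f g) v = act f v + act g v) \<and>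
     (\<forall>f\<in>BR \<sigma> H J. \<forall>g\<in>BR \<sigma> H J. \<forall>v. act (lmult \<sigma> f g) v = act f (act g v)) \<and>
     (\<forall>v. act (lconst 1) v = v)"

definition is_B_submodule :: "('r::comm_ring_1 \<Rightarrow> 'r) \<Rightarrow> 'r set \<Rightarrow> 'r set \<Rightarrow>
    ((int \<Rightarrow> 'r) \<Rightarrow> 'm::ab_group_add \<Rightarrow> 'm) \<Rightarrow> 'm set \<Rightarrow> bool" where
  "is_B_submodule \<sigma> H J act N \<longleftrightarrow> 0 \<in> N \<and> (\<forall>v\<in>N. \<forall>w\<in>N. v + w \<in> N) \<and> (\<forall>v\<in>N. - v \<in> N) \<and>
     (\<forall>f\<in>BR \<sigma> H J. \<forall>v\<in>N. act f v \<in> N)"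

definition simple_B_module :: "('r::comm_ring_1 \<Rightarrow> 'r) \<Rightarrow> 'r set \<Rightarrow> 'r set \<Rightarrow>
    ((int \<Rightarrow> 'r) \<Rightarrow> 'm::ab_group_add \<Rightarrow> 'm) \<Rightarrow> bool" where
  "simple_B_module \<sigma> H J act \<longleftrightarrow> is_B_module \<sigma> H J act \<and> (UNIV :: 'm set) \<noteq> {0} \<and>
     (\<forall>N. is_B_submodule \<sigma> H J act N \<longrightarrow> N = {0} \<or> N = UNIV)"

text \<open>Weight space M_m = {v. m v = 0} (R acts through degree 0).\<close>
definition wsp :: "((int \<Rightarrow> 'r::comm_ring_1) \<Rightarrow> 'm::ab_group_add \<Rightarrow> 'm) \<Rightarrow> 'r set \<Rightarrow> 'm set" where
  "wsp act m = {v. \<forall>a\<in>m. act (lconst a) v = 0}"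

text \<open>R-weight module: M is the internal direct sum of the M_m (m maximal), and each
  M_m is finite dimensional over R/m (equivalently finitely generated over R).\<close>
definition is_weight_module :: "((int \<Rightarrow> 'r::comm_ring_1) \<Rightarrow> 'm::ab_group_add \<Rightarrow> 'm) \<Rightarrow> bool" where
  "is_weight_module act \<longleftrightarrow>
     (\<forall>v. \<exists>S u. finite S \<and> S \<subseteq> Maxspec \<and> (\<forall>m\<in>S. u m \<in> wsp act m) \<and> v = (\<Sum>m\<in>S. u m)) \<and>
     (\<forall>S u. finite S \<and> S \<subseteq> Maxspec \<and> (\<forall>m\<in>S. u m \<in> wsp act m) \<and> (\<Sum>m\<in>S. u m) = 0
            \<longrightarrow> (\<forall>m\<in>S. u m = 0)) \<and>
     (\<forall>m\<in>Maxspec. \<exists>F. finite F \<and> F \<subseteq> wsp act m \<and>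
            (\<forall>v\<in>wsp act m. \<exists>c. v = (\<Sum>x\<in>F. act (lconst (c x)) x)))"

definition supp :: "((int \<Rightarrow> 'r::comm_ring_1) \<Rightarrow> 'm::ab_group_add \<Rightarrow> 'm) \<Rightarrow> 'r set set" where
  "supp act = {m \<in> Maxspec. wsp act m \<noteq> {0}}"

definition Lam :: "('r::comm_ring_1 \<Rightarrow> 'r) \<Rightarrow> 'r set \<Rightarrow> 'r set \<Rightarrow> nat \<Rightarrow> (int \<Rightarrow> 'r) set" where
  "Lam \<sigma> H J n = {f \<in> BR \<sigma> H J. \<forall>k. f k \<noteq> 0 \<longrightarrow> int n dvd k}"

text \<open>(m) = m Lambda_n: finite sums of products a*g, a in m, g in Lambda_n.\<close>
definition mLam :: "('r::comm_ring_1 \<Rightarrow> 'r) \<Rightarrow> 'r set \<Rightarrow> 'r set \<Rightarrow> nat \<Rightarrow> 'r set \<Rightarrow> (int \<Rightarrow> 'r) set" where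
  "mLam \<sigma> H J n m = {f. \<exists>(F::nat set) a g. finite F \<and> (\<forall>i\<in>F. a i \<in> m \<and> g i \<in> Lam \<sigma> H J n) \<and>
        f = (\<lambda>k. \<Sum>i\<in>F. lmult \<sigma> (lconst (a i)) (g i) k)}"

text \<open>M_m is a Lambda_n/(m)-module: stable under Lambda_n and annihilated by (m).\<close>
definition is_LamQ_module :: "('r::comm_ring_1 \<Rightarrow> 'r) \<Rightarrow> 'r set \<Rightarrow> 'r set \<Rightarrow> nat \<Rightarrow>
    ((int \<Rightarrow> 'r) \<Rightarrow> 'm::ab_group_add \<Rightarrow> 'm) \<Rightarrow> 'r set \<Rightarrow> bool" where
  "is_LamQ_module \<sigma> H J n act m \<longleftrightarrow>
     (\<forall>f\<in>Lam \<sigma> H J n. \<forall>v\<in>wsp act m. act f v \<in> wsp act m) \<and>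
     (\<forall>f\<in>mLam \<sigma> H J n m. \<forall>v\<in>wsp act m. act f v = 0)"

definition is_Lam_submodule :: "('r::comm_ring_1 \<Rightarrow> 'r) \<Rightarrow> 'r set \<Rightarrow> 'r set \<Rightarrow> nat \<Rightarrow>
    ((int \<Rightarrow> 'r) \<Rightarrow> 'm::ab_group_add \<Rightarrow> 'm) \<Rightarrow> 'r set \<Rightarrow> 'm set \<Rightarrow> bool" where
  "is_Lam_submodule \<sigma> H J n act m N \<longleftrightarrow> N \<subseteq> wsp act m \<and> 0 \<in> N \<and>
     (\<forall>v\<in>N. \<forall>w\<in>N. v + w \<in> N) \<and> (\<forall>v\<in>N. - v \<in> N) \<and>
     (\<forall>f\<in>Lam \<sigma> H J n. \<forall>v\<in>N. act f v \<in> N)"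

definition simple_LamQ :: "('r::comm_ring_1 \<Rightarrow> 'r) \<Rightarrow> 'r set \<Rightarrow> 'r set \<Rightarrow> nat \<Rightarrow>
    ((int \<Rightarrow> 'r) \<Rightarrow> 'm::ab_group_add \<Rightarrow> 'm) \<Rightarrow> 'r set \<Rightarrow> bool" where
  "simple_LamQ \<sigma> H J n act m \<longleftrightarrow> is_LamQ_module \<sigma> H J n act m \<and> wsp act m \<noteq> {0} \<and>
     (\<forall>N. is_Lam_submodule \<sigma> H J n act m N \<longrightarrow> N = {0} \<or> N = wsp act m)"

text \<open>sigma acting on Lambda_n coefficientwise: sigma(a t^(kn)) = sigma(a) t^(kn).\<close>
definition lmap :: "('r \<Rightarrow> 'r) \<Rightarrow> (int \<Rightarrow> 'r) \<Rightarrow> int \<Rightarrow> 'r" where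
  "lmap g f = (\<lambda>k. g (f k))"

text \<open>phi is an isomorphism of Lambda_n/(sigma^i m)-modules M_(sigma^i m) -> twisted module
  ^(sigma^i) M_m, whose action is lambda . v = sigma^(-i)(lambda) v.\<close>
definition twisted_iso :: "('r::comm_ring_1 \<Rightarrow> 'r) \<Rightarrow> 'r set \<Rightarrow> 'r set \<Rightarrow> nat \<Rightarrow>
    ((int \<Rightarrow> 'r) \<Rightarrow> 'm::ab_group_add \<Rightarrow> 'm) \<Rightarrow> 'r set \<Rightarrow> int \<Rightarrow> ('m \<Rightarrow> 'm) \<Rightarrow> bool" where
  "twisted_iso \<sigma> H J n act m i \<phi> \<longleftrightarrow>
     bij_betw \<phi> (wsp act (spow \<sigma> i ` m)) (wsp act m) \<and>
     (\<forall>v\<in>wsp act (spow \<sigma> i ` m). \<forall>w\<in>wsp act (spow \<sigma> i ` m). \<phi> (v + w) = \<phi> v + \<phi> w) \<and>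
     (\<forall>f\<in>Lam \<sigma> H J n. \<forall>v\<in>wsp act (spow \<sigma> i ` m).
        \<phi> (act f v) = act (lmap (spow \<sigma> (- i)) f) (\<phi> v))"

end

theory Submission
  imports Defs
begin

text \<open>Fix \<open>X\<close> in the orbit. As no point of the orbit is a break, no \<open>\<sigma>\<^sup>j(X)\<close> contains \<open>H\<close> or
  \<open>J\<close>, so every \<open>I\<^sup>(\<^sup>k\<^sup>)\<close> has an element outside the prime \<open>X\<close>. For \<open>x \<in> I\<^sup>(\<^sup>-\<^sup>i\<^sup>) - X\<close> and
  \<open>y \<in> I\<^sup>(\<^sup>i\<^sup>) - \<sigma>\<^sup>i(X)\<close>, left multiplication by \<open>x t\<^sup>-\<^sup>i\<close> maps \<open>M\<^bsub>\<sigma>\<^sup>i(X)\<^esub>\<close> to \<open>M\<^sub>X\<close> and \<open>y t\<^sup>i\<close> maps back;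
  both composites are multiplications by elements outside a maximal ideal, hence invertible on
  the weight space. Because \<open>\<sigma>\<^sup>n = id\<close>, elements of \<open>\<Lambda>\<^sub>n\<close> commute with \<open>x\<close> up to the twist \<open>\<sigma>\<^sup>-\<^sup>i\<close>,
  which gives the twisted isomorphism; in particular all weight spaces on the orbit are nonzero.

  To see that \<open>M\<^sub>X\<close> is simple, let \<open>N\<close> be a \<open>\<Lambda>\<^sub>n\<close>-submodule of \<open>M\<^sub>X\<close>. The vectors all of whose \<open>B\<close>-translates
  have \<open>X\<close>-component in \<open>N\<close> form a \<open>B\<close>-submodule meeting \<open>M\<^sub>X\<close> in \<open>N\<close>: since the orbit has exactly
  \<open>n\<close> points, a homogeneous element of degree \<open>k\<close> maps \<open>M\<^sub>X\<close> into itself only if \<open>n\<close> divides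
  \<open>k\<close>, i.e. only if it lies in \<open>\<Lambda>\<^sub>n\<close>. Simplicity of \<open>M\<close> then forces \<open>N = 0\<close> or \<open>N = M\<^sub>X\<close>.\<close>

section \<open>Powers of an automorphism\<close>

lemma ring_aut_bij: "ring_aut g \<Longrightarrow> bij g"
  unfolding ring_aut_def by simp

lemma ring_aut_mult: "ring_aut g \<Longrightarrow> g (a * b) = g a * g b"
  unfolding ring_aut_def by simp

lemma ring_aut_zero: "ring_aut g \<Longrightarrow> g 0 = 0"
  unfolding ring_aut_def by (metis add.right_neutral add_left_cancel)

lemma ring_aut_inv: "ring_aut g \<Longrightarrow> ring_aut (inv g)"
proof -
  assume aut: "ring_aut g"
  then have bij: "bij g" and add: "\<And>x y. g (x + y) = g x + g y"
    and mult: "\<And>x y. g (x * y) = g x * g y" and one: "g 1 = 1"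
    unfolding ring_aut_def by auto
  have g_inv: "\<And>x. g (inv g x) = x" and inv_g: "\<And>x. inv g (g x) = x"
    using bij by (simp_all add: bij_is_inj bij_is_surj surj_f_inv_f)
  show ?thesis
    unfolding ring_aut_def using bij_imp_bij_inv[OF bij] by (metis add mult one g_inv inv_g)
qed

lemma ring_aut_comp: "ring_aut f \<Longrightarrow> ring_aut g \<Longrightarrow> ring_aut (f \<circ> g)"
  unfolding ring_aut_def by (auto simp: bij_comp)

lemma ring_aut_funpow: "ring_aut g \<Longrightarrow> ring_aut (g ^^ k)"
  by (induction k) (auto simp: ring_aut_comp, simp add: ring_aut_def)

lemma ring_aut_spow: "ring_aut s \<Longrightarrow> ring_aut (spow s k)"
  unfolding spow_def by (auto simp: ring_aut_funpow ring_aut_inv)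

lemma spow_0 [simp]: "spow s 0 = id"
  unfolding spow_def by simp

lemma spow_1: "spow s 1 = s"
  unfolding spow_def by simp

lemma spow_plus_1: "bij s \<Longrightarrow> spow s (k + 1) = s \<circ> spow s k"
proof -
  assume bij: "bij s"
  have s_inv: "s \<circ> inv s = id" using bij by (metis bij_is_surj surj_iff)
  show ?thesis
  proof (cases "k \<ge> 0")
    case True
    then have "nat (k + 1) = Suc (nat k)" by simp
    then show ?thesis using True unfolding spow_def by simp
  next
    case False
    then have minus_k: "nat (- k) = Suc (nat (- (k + 1)))" by simp
    show ?thesis
    proof (cases "k = -1")
      case True then show ?thesis using s_inv unfolding spow_def by simp
    next
      case False
      with \<open>\<not> k \<ge> 0\<close> have "spow s (k + 1) = inv s ^^ nat (- (k + 1))"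
        unfolding spow_def by simp
      moreover have "spow s k = inv s \<circ> (inv s ^^ nat (- (k + 1)))"
        using \<open>\<not> k \<ge> 0\<close> minus_k unfolding spow_def by (simp only: if_False funpow.simps)
      ultimately show ?thesis by (simp add: comp_assoc[symmetric] s_inv)
    qed
  qed
qed

lemma spow_minus_1: "bij s \<Longrightarrow> spow s (k - 1) = inv s \<circ> spow s k"
proof -
  assume bij: "bij s"
  have "spow s k = s \<circ> spow s (k - 1)" using spow_plus_1[OF bij, of "k - 1"] by simp
  then have "inv s \<circ> spow s k = (inv s \<circ> s) \<circ> spow s (k - 1)" by (simp add: comp_assoc)
  then show ?thesis using bij by (simp add: bij_is_inj)
qed

lemma spow_add: "bij s \<Longrightarrow> spow s (a + b) = spow s a \<circ> spow s b"
proof (induction a rule: int_induct[where k = 0])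
  case base then show ?case by simp
next
  case (step1 i)
  have "spow s (i + 1 + b) = s \<circ> spow s (i + b)"
    using spow_plus_1[OF step1(3), of "i + b"] by (simp add: ac_simps)
  then show ?case using step1 spow_plus_1[OF step1(3), of i] by (simp add: comp_assoc)
next
  case (step2 i)
  have "spow s (i - 1 + b) = inv s \<circ> spow s (i + b)"
    using spow_minus_1[OF step2(3), of "i + b"] by (simp add: algebra_simps)
  then show ?case using step2 spow_minus_1[OF step2(3), of i] by (simp add: comp_assoc)
qed

lemma spow_add_apply: "bij s \<Longrightarrow> spow s (a + b) x = spow s a (spow s b x)"
  by (simp add: spow_add)

lemma spow_image_image: "bij s \<Longrightarrow> spow s a ` spow s b ` X = spow s (a + b) ` X"
  by (simp add: image_comp spow_add)

lemma spow_mult_period: "bij s \<Longrightarrow> s ^^ n = id \<Longrightarrow> spow s (int n * q) = id"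
proof (induction q rule: int_induct[where k = 0])
  case base then show ?case by simp
next
  case (step1 i)
  have "spow s (int n) = id" using step1(4) unfolding spow_def by (simp add: id_def)
  then show ?case using step1 spow_add[OF step1(3), of "int n" "int n * i"]
    by (simp add: algebra_simps)
next
  case (step2 i)
  have "spow s (int n) = id" using step2(4) unfolding spow_def by (simp add: id_def)
  then show ?case using step2 spow_add[OF step2(3), of "int n" "int n * (i - 1)"]
    by (simp add: algebra_simps)
qed

lemma spow_mod: "bij s \<Longrightarrow> s ^^ n = id \<Longrightarrow> spow s k = spow s (k mod int n)"
  using spow_add[of s "int n * (k div int n)" "k mod int n"] spow_mult_period[of s n "k div int n"]
  by simp

lemma spow_period_dvd: "bij s \<Longrightarrow> s ^^ n = id \<Longrightarrow> int n dvd k \<Longrightarrow> spow s k = id"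
  using spow_mult_period by (metis dvd_def)

lemma spow_closed_if_step_closed:
  assumes bij: "bij s" and period: "s ^^ n = id" and n: "n > 0" and d: "d = 1 \<or> d = -1"
    and step: "\<And>x. x \<in> P \<Longrightarrow> spow s d x \<in> P" and x: "x \<in> P"
  shows "spow s j x \<in> P"
proof -
  have iter: "spow s (d * int m) x \<in> P" for m
  proof (induction m)
    case (Suc m)
    have "spow s (d * int (Suc m)) x = spow s d (spow s (d * int m) x)"
      using spow_add_apply[OF bij, of d "d * int m" x] by (simp add: algebra_simps)
    then show ?case using Suc step by simp
  qed (use x in simp)
  define m where "m = nat ((d * j) mod int n)"
  have "(d * int m) mod int n = j mod int n"
    using d n by (auto simp: m_def mod_minus_eq)
  then have "spow s (d * int m) = spow s j" using spow_mod[OF bij period] by metis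
  then show ?thesis using iter by metis
qed

section \<open>Ideals\<close>

lemma ideal_zero: "is_ideal I \<Longrightarrow> 0 \<in> I"
  unfolding is_ideal_def by auto

lemma ideal_add: "is_ideal I \<Longrightarrow> x \<in> I \<Longrightarrow> y \<in> I \<Longrightarrow> x + y \<in> I"
  unfolding is_ideal_def by auto

lemma ideal_mult_left: "is_ideal I \<Longrightarrow> x \<in> I \<Longrightarrow> r * x \<in> I"
  unfolding is_ideal_def by auto

lemma ideal_mult_right: "is_ideal I \<Longrightarrow> x \<in> I \<Longrightarrow> x * r \<in> I"
  unfolding is_ideal_def by (metis mult.commute)

lemma iprod_ideal: "is_ideal (iprod A B)"
  unfolding iprod_def is_ideal_def by auto

lemma iprod_mem: "a \<in> A \<Longrightarrow> b \<in> B \<Longrightarrow> a * b \<in> iprod A B"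
  unfolding iprod_def by blast

lemma iprod_least: "is_ideal I \<Longrightarrow> (\<And>a b. a \<in> A \<Longrightarrow> b \<in> B \<Longrightarrow> a * b \<in> I) \<Longrightarrow> iprod A B \<subseteq> I"
  unfolding iprod_def by blast

lemma iprod_subset_left: "is_ideal A \<Longrightarrow> iprod A B \<subseteq> A"
  by (rule iprod_least) (auto simp: ideal_mult_right)

lemma iprod_mono: "A \<subseteq> A' \<Longrightarrow> B \<subseteq> B' \<Longrightarrow> iprod A B \<subseteq> iprod A' B'"
  by (rule iprod_least) (simp add: iprod_ideal, meson iprod_mem subsetD)

lemma ideal_vimage_ring_aut: "ring_aut g \<Longrightarrow> is_ideal I \<Longrightarrow> is_ideal {x. g x \<in> I}"
  unfolding is_ideal_def using ring_aut_zero[of g] unfolding ring_aut_def by auto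

lemma ideal_image_ring_aut: "ring_aut g \<Longrightarrow> is_ideal I \<Longrightarrow> is_ideal (g ` I)"
proof -
  assume aut: "ring_aut g" and I: "is_ideal I"
  have "g ` I = {x. inv g x \<in> I}"
    using bij_image_Collect_eq[OF ring_aut_bij[OF aut], of "\<lambda>x. x \<in> I"] by simp
  then show ?thesis using ideal_vimage_ring_aut[OF ring_aut_inv[OF aut] I] by simp
qed

lemma maximal_ideal_unit:
  assumes max: "is_maximal X" and r: "r \<notin> X"
  shows "\<exists>x c. x \<in> X \<and> 1 = x + c * r"
proof -
  have X: "is_ideal X" using max unfolding is_maximal_def by auto
  define I where "I = {x + c * r | x c. x \<in> X}"
  have "is_ideal I" unfolding is_ideal_def I_def
  proof (intro conjI ballI allI)
    have "(0::'a) = 0 + 0 * r" by simp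
    then show "0 \<in> {x + c * r | x c. x \<in> X}" using ideal_zero[OF X] by blast
  next
    fix a b assume "a \<in> {x + c * r | x c. x \<in> X}" "b \<in> {x + c * r | x c. x \<in> X}"
    then obtain x1 c1 x2 c2 where "x1 \<in> X" "x2 \<in> X" "a = x1 + c1 * r" "b = x2 + c2 * r" by blast
    then have "x1 + x2 \<in> X" "a + b = (x1 + x2) + (c1 + c2) * r"
      using ideal_add[OF X] by (auto simp: algebra_simps)
    then show "a + b \<in> {x + c * r | x c. x \<in> X}" by blast
  next
    fix t a assume "a \<in> {x + c * r | x c. x \<in> X}"
    then obtain x1 c1 where "x1 \<in> X" "a = x1 + c1 * r" by blast
    then have "t * x1 \<in> X" "t * a = t * x1 + (t * c1) * r"
      by (simp_all add: ideal_mult_left[OF X] algebra_simps)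
    then show "t * a \<in> {x + c * r | x c. x \<in> X}" by blast
  qed
  moreover have "X \<subseteq> I"
    unfolding I_def by (metis (mono_tags, lifting) CollectI add_0_right mult_zero_left subsetI)
  moreover have "r \<in> I"
    unfolding I_def using ideal_zero[OF X] by (metis (mono_tags, lifting) CollectI add_0 mult_1)
  ultimately have "I = UNIV" using max r unfolding is_maximal_def by blast
  then show ?thesis unfolding I_def by blast
qed

lemma maximal_imp_prime: "is_maximal X \<Longrightarrow> is_prime_ideal X"
proof -
  assume max: "is_maximal X"
  have X: "is_ideal X" using max unfolding is_maximal_def by auto
  have "b \<in> X" if ab: "a * b \<in> X" and a: "a \<notin> X" for a b
  proof -
    obtain x c where "x \<in> X" "1 = x + c * a" using maximal_ideal_unit[OF max a] by blast
    then have "b = x * b + c * (a * b)" by (metis mult.assoc mult_1 distrib_right)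
    then show ?thesis
      using ideal_add[OF X ideal_mult_right[OF X \<open>x \<in> X\<close>] ideal_mult_left[OF X ab]] by metis
  qed
  then show ?thesis using max unfolding is_prime_ideal_def is_maximal_def by blast
qed

lemma maximal_image_ring_aut:
  assumes aut: "ring_aut g" and max: "is_maximal X"
  shows "is_maximal (g ` X)"
proof -
  have bij: "bij g" and inv_aut: "ring_aut (inv g)"
    using aut ring_aut_inv unfolding ring_aut_def by auto
  have inv_g: "inv g ` g ` A = A" and g_inv: "g ` inv g ` A = A" for A
    using bij by (simp_all add: image_comp bij_is_inj bij_is_surj image_inv_f_f surj_f_inv_f)
  have "g ` X \<noteq> UNIV"
    using max inv_g[of X] bij_is_surj[OF bij_imp_bij_inv[OF bij]]
    unfolding is_maximal_def by (metis)
  moreover have "I = g ` X \<or> I = UNIV" if I: "is_ideal I" "g ` X \<subseteq> I" for I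
  proof -
    have "is_ideal (inv g ` I)" "X \<subseteq> inv g ` I"
      using ideal_image_ring_aut[OF inv_aut I(1)] image_mono[OF I(2), of "inv g"] inv_g[of X] by auto
    then have "inv g ` I = X \<or> inv g ` I = UNIV" using max unfolding is_maximal_def by blast
    then show ?thesis using g_inv[of I] bij_is_surj[OF bij] by auto
  qed
  ultimately show ?thesis
    using ideal_image_ring_aut[OF aut] max unfolding is_maximal_def by blast
qed

section \<open>The ideals \<open>I\<^sup>(\<^sup>k\<^sup>)\<close>\<close>

text \<open>\<open>shifted_prod s X d a k\<close> is \<open>s\<^sup>a(X) s\<^sup>a\<^sup>+\<^sup>d(X) \<dots> s\<^sup>a\<^sup>+\<^sup>(\<^sup>k\<^sup>-\<^sup>1\<^sup>)\<^sup>d(X)\<close>;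
  \<open>I\<^sup>(\<^sup>k\<^sup>)\<close> is the case \<open>X = J, d = 1, a = 0\<close> and \<open>I\<^sup>(\<^sup>-\<^sup>k\<^sup>)\<close> the case \<open>X = H, d = a = -1\<close>.\<close>

primrec shifted_prod :: "('r::comm_ring_1 \<Rightarrow> 'r) \<Rightarrow> 'r set \<Rightarrow> int \<Rightarrow> int \<Rightarrow> nat \<Rightarrow> 'r set" where
  "shifted_prod s X d a 0 = UNIV"
| "shifted_prod s X d a (Suc k) = iprod (shifted_prod s X d a k) (spow s (a + d * int k) ` X)"

lemma shifted_prod_ideal: "is_ideal (shifted_prod s X d a k)"
  by (cases k) (simp add: is_ideal_def, simp add: iprod_ideal)

lemma Iseq_eq_shifted_prod:
  "Iseq s H J k =
     (if 0 \<le> k then shifted_prod s J 1 0 (nat k) else shifted_prod s H (-1) (-1) (nat (- k)))"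
proof -
  have "Jpow s J m = shifted_prod s J 1 0 m" "Hpow s H m = shifted_prod s H (-1) (-1) m" for m
    by (induction m) (auto simp: algebra_simps)
  then show ?thesis unfolding Iseq_def by simp
qed

lemma Iseq_ideal: "is_ideal (Iseq s H J k)"
  unfolding Iseq_eq_shifted_prod by (simp add: shifted_prod_ideal)

lemma Iseq_0 [simp]: "Iseq s H J 0 = UNIV"
  unfolding Iseq_def by simp

lemma shifted_prod_spow:
  assumes aut: "ring_aut s"
  shows "x \<in> shifted_prod s X d a k \<Longrightarrow> spow s j x \<in> shifted_prod s X d (a + j) k"
proof (induction k arbitrary: x)
  case (Suc k)
  have g: "ring_aut (spow s j)" by (rule ring_aut_spow[OF aut])
  have "iprod (shifted_prod s X d a k) (spow s (a + d * int k) ` X)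
          \<subseteq> {x. spow s j x \<in> shifted_prod s X d (a + j) (Suc k)}"
  proof (rule iprod_least[OF ideal_vimage_ring_aut[OF g shifted_prod_ideal]])
    fix p q assume p: "p \<in> shifted_prod s X d a k" and q: "q \<in> spow s (a + d * int k) ` X"
    have "spow s j q \<in> spow s (a + j + d * int k) ` X"
      using q spow_image_image[OF ring_aut_bij[OF aut], of j "a + d * int k" X]
      by (auto simp: ac_simps)
    then show "p * q \<in> {x. spow s j x \<in> shifted_prod s X d (a + j) (Suc k)}"
      using Suc.IH[OF p] ring_aut_mult[OF g] by (auto intro: iprod_mem)
  qed
  then show ?case using Suc.prems by auto
qed simp

lemma shifted_prod_append:
  "x \<in> shifted_prod s X d a k \<Longrightarrow> y \<in> shifted_prod s X d (a + d * int k) l \<Longrightarrow>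
    x * y \<in> shifted_prod s X d a (k + l)"
proof (induction l arbitrary: y)
  case 0 then show ?case by (simp add: ideal_mult_right[OF shifted_prod_ideal])
next
  case (Suc l)
  have "iprod (shifted_prod s X d (a + d * int k) l) (spow s (a + d * int k + d * int l) ` X)
          \<subseteq> {y. x * y \<in> shifted_prod s X d a (k + Suc l)}"
  proof (rule iprod_least)
    show "is_ideal {y. x * y \<in> shifted_prod s X d a (k + Suc l)}"
      using shifted_prod_ideal[of s X d a "k + Suc l"] unfolding is_ideal_def
      by (auto simp: algebra_simps)
  next
    fix p q assume p: "p \<in> shifted_prod s X d (a + d * int k) l"
      and q: "q \<in> spow s (a + d * int k + d * int l) ` X"
    have "q \<in> spow s (a + d * int (k + l)) ` X" using q by (simp add: algebra_simps)
    then have "(x * p) * q \<in> shifted_prod s X d a (Suc (k + l))"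
      unfolding shifted_prod.simps by (rule iprod_mem[OF Suc.IH[OF Suc.prems(1) p]])
    then show "p * q \<in> {y. x * y \<in> shifted_prod s X d a (k + Suc l)}"
      by (simp add: mult.assoc)
  qed
  then show ?case using Suc.prems by auto
qed

lemma shifted_prod_prefix: "shifted_prod s X d a (k + l) \<subseteq> shifted_prod s X d a k"
proof (induction l)
  case (Suc l)
  then show ?case using iprod_subset_left[OF shifted_prod_ideal, of s X d a "k + l"] by auto
qed simp

lemma shifted_prod_suffix:
  "shifted_prod s X d a (k + l) \<subseteq> shifted_prod s X d (a + d * int k) l"
proof (induction l)
  case (Suc l)
  have eq: "a + d * int (k + l) = a + d * int k + d * int l" by (simp add: algebra_simps)
  show ?case
    unfolding add_Suc_right shifted_prod.simps eq by (rule iprod_mono[OF Suc.IH subset_refl])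
qed simp

lemma shifted_prod_rotate:
  assumes bij: "bij s" and period: "spow s (d * int k) = id"
  shows "shifted_prod s X d (a + d) k \<subseteq> shifted_prod s X d a k"
proof (cases k)
  case (Suc k')
  have last: "spow s (a + d + d * int k') = spow s a"
    using spow_add[OF bij, of a "d * int k"] period Suc by (simp add: algebra_simps)
  have "iprod (shifted_prod s X d (a + d) k') (spow s (a + d + d * int k') ` X)
          \<subseteq> shifted_prod s X d a k"
  proof (rule iprod_least[OF shifted_prod_ideal])
    fix p q assume p: "p \<in> shifted_prod s X d (a + d) k'"
      and q: "q \<in> spow s (a + d + d * int k') ` X"
    have "q \<in> shifted_prod s X d a 1" using q last iprod_mem[of 1 UNIV q] by simp
    from shifted_prod_append[OF this] p have "q * p \<in> shifted_prod s X d a (1 + k')" by simp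
    then show "p * q \<in> shifted_prod s X d a k" using Suc by (simp add: mult.commute)
  qed
  then show ?thesis using Suc by simp
qed simp

lemma shifted_prod_not_subset_prime:
  assumes P: "is_prime_ideal P" and X: "\<forall>j. \<not> spow s j ` X \<subseteq> P"
  shows "\<not> shifted_prod s X d a k \<subseteq> P"
proof (induction k)
  case 0 then show ?case using P unfolding is_prime_ideal_def by auto
next
  case (Suc k)
  then obtain p where p: "p \<in> shifted_prod s X d a k" "p \<notin> P" by auto
  obtain q where q: "q \<in> spow s (a + d * int k) ` X" "q \<notin> P" using X by blast
  have "p * q \<notin> P" using P p q unfolding is_prime_ideal_def by auto
  moreover have "p * q \<in> shifted_prod s X d a (Suc k)" using p q by (simp add: iprod_mem)
  ultimately show ?case by blast
qed

lemma Iseq_antimono_nonneg: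
  assumes "0 \<le> j" "j \<le> k"
  shows "Iseq s H J k \<subseteq> Iseq s H J j"
proof -
  obtain d where "nat k = nat j + d" using assms by (metis le_add_diff_inverse nat_mono)
  then show ?thesis
    using assms shifted_prod_prefix[of s J 1 0 "nat j" d] by (simp add: Iseq_eq_shifted_prod)
qed

lemma Iseq_antimono_nonpos:
  assumes "k \<le> j" "j \<le> 0"
  shows "Iseq s H J k \<subseteq> Iseq s H J j"
proof (cases "j = 0")
  case False
  obtain d where "nat (- k) = nat (- j) + d" using assms by (metis le_add_diff_inverse nat_mono neg_le_iff_le)
  then show ?thesis
    using assms False shifted_prod_prefix[of s H "-1" "-1" "nat (- j)" d]
    by (simp add: Iseq_eq_shifted_prod)
qed simp

lemma Iseq_spow_nonneg:
  assumes aut: "ring_aut s" and k: "0 \<le> k" and l: "l \<le> - k" and y: "y \<in> Iseq s H J l"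
  shows "spow s k y \<in> Iseq s H J (k + l)"
proof (cases "k + l = 0")
  case False
  then have "spow s k y \<in> shifted_prod s H (-1) (-1 + k) (nat k + nat (- (k + l)))"
    using shifted_prod_spow[OF aut, of y H "-1" "-1" "nat (- l)" k] y k l
    by (simp add: Iseq_eq_shifted_prod nat_add_distrib[symmetric])
  then have "spow s k y \<in> shifted_prod s H (-1) (-1) (nat (- (k + l)))"
    using shifted_prod_suffix[of s H "-1" "-1 + k" "nat k"] k by auto
  then show ?thesis using k l False by (simp add: Iseq_eq_shifted_prod)
qed simp

lemma Iseq_spow_nonpos:
  assumes aut: "ring_aut s" and k: "k \<le> 0" and l: "- k \<le> l" and y: "y \<in> Iseq s H J l"
  shows "spow s k y \<in> Iseq s H J (k + l)"
proof (cases "k + l = 0")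
  case False
  then have "spow s k y \<in> shifted_prod s J 1 (0 + k) (nat (- k) + nat (k + l))"
    using shifted_prod_spow[OF aut, of y J 1 0 "nat l" k] y k l
    by (simp add: Iseq_eq_shifted_prod nat_add_distrib[symmetric])
  then have "spow s k y \<in> shifted_prod s J 1 0 (nat (k + l))"
    using shifted_prod_suffix[of s J 1 "0 + k" "nat (- k)"] k by auto
  then show ?thesis using k l by (simp add: Iseq_eq_shifted_prod)
qed simp

lemma Iseq_mult_nonneg:
  assumes aut: "ring_aut s" and "0 \<le> k" "0 \<le> l"
    and x: "x \<in> Iseq s H J k" and y: "y \<in> Iseq s H J l"
  shows "x * spow s k y \<in> Iseq s H J (k + l)"
proof -
  have "spow s k y \<in> shifted_prod s J 1 (0 + 1 * int (nat k)) (nat l)"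
    using shifted_prod_spow[OF aut, of y J 1 0 "nat l" k] y assms(2,3)
    by (simp add: Iseq_eq_shifted_prod)
  from shifted_prod_append[OF _ this, of x]
  have "x * spow s k y \<in> shifted_prod s J 1 0 (nat k + nat l)"
    using x assms(2) by (simp add: Iseq_eq_shifted_prod)
  moreover have "nat k + nat l = nat (k + l)" using assms(2,3) by simp
  ultimately show ?thesis using assms(2,3) by (simp add: Iseq_eq_shifted_prod)
qed

lemma Iseq_mult_neg:
  assumes aut: "ring_aut s" and "k < 0" "l < 0"
    and x: "x \<in> Iseq s H J k" and y: "y \<in> Iseq s H J l"
  shows "x * spow s k y \<in> Iseq s H J (k + l)"
proof -
  have "spow s k y \<in> shifted_prod s H (-1) (-1 + (-1) * int (nat (- k))) (nat (- l))"
    using shifted_prod_spow[OF aut, of y H "-1" "-1" "nat (- l)" k] y assms(2,3)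
    by (simp add: Iseq_eq_shifted_prod)
  from shifted_prod_append[OF _ this, of x]
  have "x * spow s k y \<in> shifted_prod s H (-1) (-1) (nat (- k) + nat (- l))"
    using x assms(2) by (simp add: Iseq_eq_shifted_prod)
  moreover have "nat (- k) + nat (- l) = nat (- (k + l))" using assms(2,3) by simp
  ultimately show ?thesis using assms(2,3) by (simp add: Iseq_eq_shifted_prod)
qed

text \<open>This is the closure of \<open>B\<close> under multiplication: \<open>I\<^sup>(\<^sup>k\<^sup>) \<sigma>\<^sup>k(I\<^sup>(\<^sup>l\<^sup>)) \<subseteq> I\<^sup>(\<^sup>k\<^sup>+\<^sup>l\<^sup>)\<close>.\<close>

lemma Iseq_mult:
  assumes aut: "ring_aut s" and x: "x \<in> Iseq s H J k" and y: "y \<in> Iseq s H J l"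
  shows "x * spow s k y \<in> Iseq s H J (k + l)"
proof -
  have "x \<in> Iseq s H J (k + l)" if "0 \<le> k" "l < 0" "0 \<le> k + l"
    using that x Iseq_antimono_nonneg[of "k + l" k s H J] by auto
  moreover have "x \<in> Iseq s H J (k + l)" if "k < 0" "0 \<le> l" "k + l \<le> 0"
    using that x Iseq_antimono_nonpos[of k "k + l" s H J] by auto
  moreover have "spow s k y \<in> Iseq s H J (k + l)" if "0 \<le> k" "l < 0" "k + l < 0"
    using that Iseq_spow_nonneg[OF aut _ _ y] by simp
  moreover have "spow s k y \<in> Iseq s H J (k + l)" if "k < 0" "0 \<le> l" "0 < k + l"
    using that Iseq_spow_nonpos[OF aut _ _ y] by simp
  ultimately show ?thesis
    using Iseq_mult_nonneg[OF aut _ _ x y] Iseq_mult_neg[OF aut _ _ x y]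
    by (cases "0 \<le> k"; cases "0 \<le> l"; cases "0 \<le> k + l"; cases "k + l \<le> 0")
      (auto intro: ideal_mult_left[OF Iseq_ideal] ideal_mult_right[OF Iseq_ideal])
qed

lemma Iseq_spow_closed:
  assumes aut: "ring_aut s" and period: "s ^^ n = id" and dvd: "int n dvd k"
    and x: "x \<in> Iseq s H J k"
  shows "spow s j x \<in> Iseq s H J k"
proof (cases "k = 0")
  case False
  have bij: "bij s" using aut by (rule ring_aut_bij)
  have n: "n > 0" using dvd False by (cases n) auto
  show ?thesis
  proof (cases "0 \<le> k")
    case True
    have "spow s (1 * int (nat k)) = id" using spow_period_dvd[OF bij period] dvd True by simp
    then have "spow s 1 x \<in> shifted_prod s J 1 0 (nat k)" if "x \<in> shifted_prod s J 1 0 (nat k)" for x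
      using shifted_prod_spow[OF aut that, of 1] shifted_prod_rotate[OF bij, of 1 "nat k" J 0] by auto
    from spow_closed_if_step_closed[OF bij period n _ this] show ?thesis
      using x True by (simp add: Iseq_eq_shifted_prod)
  next
    case False
    have "spow s (-1 * int (nat (- k))) = id" using spow_period_dvd[OF bij period] dvd False by simp
    then have "spow s (-1) x \<in> shifted_prod s H (-1) (-1) (nat (- k))"
      if "x \<in> shifted_prod s H (-1) (-1) (nat (- k))" for x
      using shifted_prod_spow[OF aut that, of "-1"]
        shifted_prod_rotate[OF bij, of "-1" "nat (- k)" H "-1"] by auto
    from spow_closed_if_step_closed[OF bij period n _ this] show ?thesis
      using x False by (simp add: Iseq_eq_shifted_prod)
  qed
qed simp

lemma Iseq_not_subset_prime:
  assumes "is_prime_ideal P" "\<forall>j. \<not> spow s j ` H \<subseteq> P" "\<forall>j. \<not> spow s j ` J \<subseteq> P"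
  shows "\<not> Iseq s H J k \<subseteq> P"
  using shifted_prod_not_subset_prime[OF assms(1)] assms(2,3)
  by (simp add: Iseq_eq_shifted_prod)

section \<open>Monomials and modules over \<open>B\<close>\<close>

definition lmonom :: "'r::zero \<Rightarrow> int \<Rightarrow> int \<Rightarrow> 'r" where
  "lmonom a k = (\<lambda>j. if j = k then a else 0)"

lemma lconst_eq_lmonom: "lconst a = lmonom a 0"
  unfolding lconst_def lmonom_def by auto

lemma lmonom_in_BR:
  assumes "a \<in> Iseq s H J k"
  shows "lmonom a k \<in> BR s H J"
proof -
  have "finite {j. lmonom a k j \<noteq> 0}"
    by (rule finite_subset[of _ "{k}"]) (auto simp: lmonom_def)
  then show ?thesis using assms unfolding BR_def lmonom_def by (simp add: ideal_zero[OF Iseq_ideal])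
qed

lemma lconst_in_BR: "lconst a \<in> BR s H J"
  unfolding lconst_eq_lmonom by (rule lmonom_in_BR) simp

lemma zero_in_BR: "(\<lambda>_. 0) \<in> BR s H J"
  unfolding BR_def by (simp add: ideal_zero[OF Iseq_ideal])

lemma ladd_in_BR:
  assumes f: "f \<in> BR s H J" and g: "g \<in> BR s H J"
  shows "ladd f g \<in> BR s H J"
proof -
  have "{k. ladd f g k \<noteq> 0} \<subseteq> {k. f k \<noteq> 0} \<union> {k. g k \<noteq> 0}" unfolding ladd_def by auto
  then have "finite {k. ladd f g k \<noteq> 0}" using f g finite_subset unfolding BR_def by blast
  then show ?thesis using f g unfolding BR_def ladd_def by (simp add: ideal_add[OF Iseq_ideal])
qed

lemma lmonom_in_Lam: "a \<in> Iseq s H J k \<Longrightarrow> int n dvd k \<Longrightarrow> lmonom a k \<in> Lam s H J n"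
  unfolding Lam_def using lmonom_in_BR by (auto simp: lmonom_def)

lemma lmult_lmonom:
  assumes aut: "ring_aut s"
  shows "lmult s (lmonom a k) (lmonom b l) = lmonom (a * spow s k b) (k + l)"
proof (cases "a = 0")
  case False
  then have "{i. lmonom a k i \<noteq> 0} = {k}" unfolding lmonom_def by auto
  then show ?thesis
    unfolding lmult_def lmonom_def using ring_aut_zero[OF ring_aut_spow[OF aut]] by auto
qed (simp add: lmult_def lmonom_def)

lemma lmult_lconst: "lmult s (lconst a) g = (\<lambda>j. a * g j)"
proof (cases "a = 0")
  case False
  then have "{i. lconst a i \<noteq> 0} = {0}" unfolding lconst_def by auto
  then show ?thesis unfolding lmult_def by (simp add: lconst_def)
qed (simp add: lmult_def lconst_def)

lemma lmult_lconst_in_BR: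
  assumes g: "g \<in> BR s H J"
  shows "lmult s (lconst c) g \<in> BR s H J"
proof -
  have "{k. c * g k \<noteq> 0} \<subseteq> {k. g k \<noteq> 0}" by auto
  then have "finite {k. c * g k \<noteq> 0}" using g finite_subset unfolding BR_def by blast
  then show ?thesis using g unfolding BR_def lmult_lconst by (simp add: ideal_mult_left[OF Iseq_ideal])
qed

lemma lmap_spow_in_Lam:
  assumes aut: "ring_aut \<sigma>" and period: "\<sigma> ^^ n = id" and f: "f \<in> Lam \<sigma> H J n"
  shows "lmap (spow \<sigma> j) f \<in> Lam \<sigma> H J n"
proof -
  have zero: "spow \<sigma> j 0 = 0" by (rule ring_aut_zero[OF ring_aut_spow[OF aut]])
  have fin: "finite {k. f k \<noteq> 0}" and coeff: "\<And>k. f k \<in> Iseq \<sigma> H J k"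
    and dvd: "\<And>k. f k \<noteq> 0 \<Longrightarrow> int n dvd k"
    using f unfolding Lam_def BR_def by auto
  have supp: "{k. lmap (spow \<sigma> j) f k \<noteq> 0} \<subseteq> {k. f k \<noteq> 0}"
    unfolding lmap_def using zero by auto
  have "lmap (spow \<sigma> j) f k \<in> Iseq \<sigma> H J k" for k
  proof (cases "f k = 0")
    case True then show ?thesis unfolding lmap_def using zero ideal_zero[OF Iseq_ideal] by simp
  next
    case False then show ?thesis
      unfolding lmap_def by (rule Iseq_spow_closed[OF aut period dvd coeff])
  qed
  then show ?thesis
    using finite_subset[OF supp fin] supp dvd unfolding Lam_def BR_def by auto
qed

lemma bij_betw_if_comps_bij:
  assumes "f ` A \<subseteq> B" "g ` B \<subseteq> A"
    and "bij_betw (\<lambda>x. g (f x)) A A" "bij_betw (\<lambda>x. f (g x)) B B"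
  shows "bij_betw f A B"
  unfolding bij_betw_def
proof
  show "inj_on f A" using assms(3) unfolding bij_betw_def inj_on_def by metis
  show "f ` A = B" using assms(1,2,4) unfolding bij_betw_def by blast
qed

locale B_module =
  fixes \<sigma> :: "'r::comm_ring_1 \<Rightarrow> 'r" and H J :: "'r set"
    and act :: "(int \<Rightarrow> 'r) \<Rightarrow> 'm::ab_group_add \<Rightarrow> 'm"
  assumes aut: "ring_aut \<sigma>" and module: "is_B_module \<sigma> H J act"
begin

lemma act_add: "f \<in> BR \<sigma> H J \<Longrightarrow> act f (v + w) = act f v + act f w"
  using module unfolding is_B_module_def by auto

lemma act_ladd: "f \<in> BR \<sigma> H J \<Longrightarrow> g \<in> BR \<sigma> H J \<Longrightarrow> act (ladd f g) v = act f v + act g v"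
  using module unfolding is_B_module_def by auto

lemma act_act: "f \<in> BR \<sigma> H J \<Longrightarrow> g \<in> BR \<sigma> H J \<Longrightarrow> act f (act g v) = act (lmult \<sigma> f g) v"
  using module unfolding is_B_module_def by auto

lemma act_lconst_1: "act (lconst 1) v = v"
  using module unfolding is_B_module_def by auto

lemma act_zero_fun: "act (\<lambda>_. 0) v = 0"
proof -
  have "ladd (\<lambda>_. 0) (\<lambda>_. 0) = (\<lambda>_. 0 :: 'r)" unfolding ladd_def by simp
  then show ?thesis using act_ladd[OF zero_in_BR zero_in_BR, of v] by simp
qed

lemma act_zero: "f \<in> BR \<sigma> H J \<Longrightarrow> act f 0 = 0"
  using act_add[of f 0 0] by simp

lemma act_minus: "f \<in> BR \<sigma> H J \<Longrightarrow> act f (- v) = - act f v"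
  using act_add[of f v "- v"] act_zero by (metis add.right_inverse minus_unique)

lemma act_sum: "f \<in> BR \<sigma> H J \<Longrightarrow> act f (\<Sum>i\<in>F. u i) = (\<Sum>i\<in>F. act f (u i))"
  by (induction F rule: infinite_finite_induct) (auto simp: act_zero act_add)

lemma act_sum_fun:
  assumes "finite F" "\<forall>i\<in>F. t i \<in> BR \<sigma> H J"
  shows "(\<lambda>j. \<Sum>i\<in>F. t i j) \<in> BR \<sigma> H J \<and> act (\<lambda>j. \<Sum>i\<in>F. t i j) v = (\<Sum>i\<in>F. act (t i) v)"
  using assms
proof (induction F rule: finite_induct)
  case empty
  then show ?case using zero_in_BR act_zero_fun by simp
next
  case (insert x F)
  then have "(\<lambda>j. \<Sum>i\<in>insert x F. t i j) = ladd (t x) (\<lambda>j. \<Sum>i\<in>F. t i j)"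
    unfolding ladd_def by auto
  then show ?case using insert ladd_in_BR act_ladd by auto
qed

lemma act_lmonom_lmonom:
  "a \<in> Iseq \<sigma> H J k \<Longrightarrow> b \<in> Iseq \<sigma> H J l \<Longrightarrow>
    act (lmonom a k) (act (lmonom b l) v) = act (lmonom (a * spow \<sigma> k b) (k + l)) v"
  using act_act[OF lmonom_in_BR lmonom_in_BR] lmult_lmonom[OF aut] by simp

lemma act_eq_sum_lmonom:
  assumes "finite S" "f \<in> BR \<sigma> H J" "{k. f k \<noteq> 0} \<subseteq> S"
  shows "act f v = (\<Sum>k\<in>S. act (lmonom (f k) k) v)"
  using assms
proof (induction S arbitrary: f rule: finite_induct)
  case empty
  then have "f = (\<lambda>_. 0)" by auto
  then show ?case using act_zero_fun by simp
next
  case (insert x S)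
  define g where "g = (\<lambda>k. if k = x then 0 else f k)"
  have fx: "f x \<in> Iseq \<sigma> H J x" using insert.prems unfolding BR_def by auto
  have g_supp: "{k. g k \<noteq> 0} \<subseteq> {k. f k \<noteq> 0}" "{k. g k \<noteq> 0} \<subseteq> S"
    using insert.prems(2) unfolding g_def by auto
  have "finite {k. g k \<noteq> 0}" using insert.prems(1) g_supp(1) finite_subset unfolding BR_def by blast
  then have g: "g \<in> BR \<sigma> H J"
    using insert.prems(1) ideal_zero[OF Iseq_ideal] unfolding BR_def g_def by auto
  have "f = ladd (lmonom (f x) x) g" unfolding ladd_def lmonom_def g_def by auto
  then have split: "act f v = act (lmonom (f x) x) v + act g v"
    using act_ladd[OF lmonom_in_BR[OF fx] g] by metis
  have "act g v = (\<Sum>k\<in>S. act (lmonom (g k) k) v)" by (rule insert.IH[OF g g_supp(2)])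
  also have "\<dots> = (\<Sum>k\<in>S. act (lmonom (f k) k) v)"
    using insert.hyps(2) unfolding g_def by (intro sum.cong) auto
  finally show ?case using split insert.hyps by simp
qed

lemma wsp_zero: "0 \<in> wsp act X"
  unfolding wsp_def using act_zero[OF lconst_in_BR] by auto

lemma wsp_add: "v \<in> wsp act X \<Longrightarrow> w \<in> wsp act X \<Longrightarrow> v + w \<in> wsp act X"
  unfolding wsp_def using act_add[OF lconst_in_BR] by auto

lemma wsp_minus: "v \<in> wsp act X \<Longrightarrow> - v \<in> wsp act X"
  unfolding wsp_def using act_minus[OF lconst_in_BR] by auto

lemma wsp_diff: "v \<in> wsp act X \<Longrightarrow> w \<in> wsp act X \<Longrightarrow> v - w \<in> wsp act X"
  using wsp_add wsp_minus by (metis diff_conv_add_uminus)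

lemma wsp_sum: "\<forall>i\<in>F. u i \<in> wsp act X \<Longrightarrow> (\<Sum>i\<in>F. u i) \<in> wsp act X"
  by (induction F rule: infinite_finite_induct) (auto simp: wsp_zero wsp_add)

text \<open>\<open>a t\<^sup>k\<close> maps \<open>M\<^sub>X\<close> into \<open>M\<^bsub>\<sigma>\<^sup>k(X)\<^esub>\<close>, since \<open>b a t\<^sup>k = a t\<^sup>k \<sigma>\<^sup>-\<^sup>k(b)\<close>.\<close>

lemma act_lmonom_wsp:
  assumes a: "a \<in> Iseq \<sigma> H J k" and v: "v \<in> wsp act X"
  shows "act (lmonom a k) v \<in> wsp act (spow \<sigma> k ` X)"
  unfolding wsp_def
proof (intro CollectI ballI)
  fix b assume "b \<in> spow \<sigma> k ` X"
  then obtain c where c: "c \<in> X" "b = spow \<sigma> k c" by auto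
  have "act (lconst b) (act (lmonom a k) v) = act (lmonom a k) (act (lmonom c 0) v)"
    using act_lmonom_lmonom[of b 0 a k v] act_lmonom_lmonom[OF a, of c 0 v] a c
    by (simp add: lconst_eq_lmonom mult.commute)
  also have "act (lmonom c 0) v = 0" using v c unfolding wsp_def lconst_eq_lmonom by auto
  finally show "act (lconst b) (act (lmonom a k) v) = 0"
    using act_zero[OF lmonom_in_BR[OF a]] by simp
qed

lemma act_lconst_wsp: "v \<in> wsp act X \<Longrightarrow> act (lconst r) v \<in> wsp act X"
  using act_lmonom_wsp[of r 0 v X] by (simp add: lconst_eq_lmonom)

lemma act_lconst_lconst: "act (lconst c) (act (lconst r) v) = act (lconst (c * r)) v"
proof -
  have "lmult \<sigma> (lconst c) (lconst r) = lconst (c * r)"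
    unfolding lmult_lconst by (auto simp: lconst_def)
  then show ?thesis using act_act[OF lconst_in_BR lconst_in_BR] by metis
qed

lemma act_lconst_eq_self:
  assumes "x \<in> X" "1 = x + c" "v \<in> wsp act X"
  shows "act (lconst c) v = v"
proof -
  have "lconst 1 = ladd (lconst c) (lconst x)"
    unfolding ladd_def lconst_def using assms(2) by (auto simp: add.commute)
  then have "v = act (lconst c) v + act (lconst x) v"
    using act_lconst_1 act_ladd[OF lconst_in_BR lconst_in_BR] by metis
  then show ?thesis using assms(1,3) unfolding wsp_def by auto
qed

text \<open>An element outside a maximal ideal is a unit modulo it, hence acts invertibly on the
  weight space.\<close>

lemma bij_betw_act_lconst:
  assumes max: "is_maximal X" and r: "r \<notin> X"
  shows "bij_betw (act (lconst r)) (wsp act X) (wsp act X)"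
proof -
  obtain x c where xc: "x \<in> X" "1 = x + c * r" using maximal_ideal_unit[OF max r] by blast
  show ?thesis
  proof (rule bij_betw_byWitness[where f' = "act (lconst c)"])
    show "\<forall>v\<in>wsp act X. act (lconst c) (act (lconst r) v) = v"
      using act_lconst_eq_self[OF xc] act_lconst_lconst by simp
    show "\<forall>v\<in>wsp act X. act (lconst r) (act (lconst c) v) = v"
      using act_lconst_eq_self[OF xc(1), of "r * c"] xc(2) act_lconst_lconst
      by (simp add: mult.commute)
  qed (auto simp: act_lconst_wsp)
qed

end

section \<open>Weight modules\<close>

definition weight_decomp ::
    "((int \<Rightarrow> 'r::comm_ring_1) \<Rightarrow> 'm::ab_group_add \<Rightarrow> 'm) \<Rightarrow> 'm \<Rightarrow> 'r set set \<Rightarrow> ('r set \<Rightarrow> 'm) \<Rightarrow> bool"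
  where "weight_decomp act v S u \<longleftrightarrow>
    finite S \<and> S \<subseteq> Maxspec \<and> (\<forall>Y\<in>S. u Y \<in> wsp act Y) \<and> v = (\<Sum>Y\<in>S. u Y)"

text \<open>The component of \<open>v\<close> in \<open>M\<^sub>X\<close>; in a weight module it does not depend on the chosen
  decomposition (\<open>weight_proj_eq\<close>).\<close>

definition weight_proj :: "((int \<Rightarrow> 'r::comm_ring_1) \<Rightarrow> 'm::ab_group_add \<Rightarrow> 'm) \<Rightarrow> 'r set \<Rightarrow> 'm \<Rightarrow> 'm"
  where "weight_proj act X v =
    (SOME x. \<exists>S u. weight_decomp act v S u \<and> x = (if X \<in> S then u X else 0))"

text \<open>For a \<open>\<Lambda>\<^sub>n\<close>-submodule \<open>N\<close> of \<open>M\<^sub>X\<close> this is a \<open>B\<close>-submodule of \<open>M\<close> meeting \<open>M\<^sub>X\<close> exactly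
  in \<open>N\<close>; it transports simplicity from \<open>M\<close> to \<open>M\<^sub>X\<close>.\<close>

definition weight_preimage :: "('r::comm_ring_1 \<Rightarrow> 'r) \<Rightarrow> 'r set \<Rightarrow> 'r set \<Rightarrow>
    ((int \<Rightarrow> 'r) \<Rightarrow> 'm::ab_group_add \<Rightarrow> 'm) \<Rightarrow> 'r set \<Rightarrow> 'm set \<Rightarrow> 'm set"
  where "weight_preimage \<sigma> H J act X N =
    {w. \<forall>c k. c \<in> Iseq \<sigma> H J k \<longrightarrow> weight_proj act X (act (lmonom c k) w) \<in> N}"

locale weight_B_module = B_module \<sigma> H J act
  for \<sigma> :: "'r::comm_ring_1 \<Rightarrow> 'r" and H J and act :: "(int \<Rightarrow> 'r) \<Rightarrow> 'm::ab_group_add \<Rightarrow> 'm" +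
  assumes weight: "is_weight_module act"
begin

lemma weight_decomp_exists: "\<exists>S u. weight_decomp act v S u"
proof -
  have "\<forall>v. \<exists>S u. finite S \<and> S \<subseteq> Maxspec \<and> (\<forall>m\<in>S. u m \<in> wsp act m) \<and> v = (\<Sum>m\<in>S. u m)"
    using weight unfolding is_weight_module_def by (elim conjE)
  then show ?thesis unfolding weight_decomp_def by blast
qed

lemma weight_decomp_eq_0:
  assumes "finite S" "S \<subseteq> Maxspec" "\<forall>Y\<in>S. u Y \<in> wsp act Y" "(\<Sum>Y\<in>S. u Y) = 0" "Y \<in> S"
  shows "u Y = 0"
proof -
  have "\<forall>S u. finite S \<and> S \<subseteq> Maxspec \<and> (\<forall>m\<in>S. u m \<in> wsp act m) \<and> (\<Sum>m\<in>S. u m) = 0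
      \<longrightarrow> (\<forall>m\<in>S. u m = 0)"
    using weight unfolding is_weight_module_def by (elim conjE)
  then show ?thesis using assms by blast
qed

lemma weight_decomp_extend:
  assumes "weight_decomp act v S u" "finite T" "S \<subseteq> T"
  shows "(\<Sum>Y\<in>T. if Y \<in> S then u Y else 0) = v"
  using assms sum.inter_restrict[OF assms(2), of u S] unfolding weight_decomp_def
  by (simp add: Int_absorb1)

lemma weight_decomp_component_unique:
  assumes d: "weight_decomp act v S u" and d': "weight_decomp act v S' u'"
  shows "(if X \<in> S then u X else 0) = (if X \<in> S' then u' X else 0)"
proof -
  define e where "e Y = (if Y \<in> S then u Y else 0) - (if Y \<in> S' then u' Y else 0)" for Y
  have T: "finite (S \<union> S')" "S \<union> S' \<subseteq> Maxspec" using d d' unfolding weight_decomp_def by auto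
  have "\<forall>Y\<in>S \<union> S'. e Y \<in> wsp act Y"
    using d d' wsp_diff wsp_zero unfolding e_def weight_decomp_def by auto
  moreover have "(\<Sum>Y\<in>S \<union> S'. e Y) = 0"
    using weight_decomp_extend[OF d T(1) Un_upper1] weight_decomp_extend[OF d' T(1) Un_upper2]
    unfolding e_def sum_subtractf by simp
  ultimately have "e X = 0" if "X \<in> S \<union> S'" using weight_decomp_eq_0[OF T, of e] that by blast
  then show ?thesis unfolding e_def by (cases "X \<in> S \<union> S'") auto
qed

lemma weight_proj_eq:
  assumes d: "weight_decomp act v S u"
  shows "weight_proj act X v = (if X \<in> S then u X else 0)"
proof -
  have "\<exists>x S u. weight_decomp act v S u \<and> x = (if X \<in> S then u X else 0)" using d by blast
  from someI_ex[OF this] obtain S' u' where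
    "weight_decomp act v S' u'" "weight_proj act X v = (if X \<in> S' then u' X else 0)"
    unfolding weight_proj_def by blast
  then show ?thesis using weight_decomp_component_unique[OF d] by simp
qed

lemma weight_proj_add: "weight_proj act X (v + w) = weight_proj act X v + weight_proj act X w"
proof -
  obtain S u S' u' where d: "weight_decomp act v S u" and d': "weight_decomp act w S' u'"
    using weight_decomp_exists by meson
  define e where "e Y = (if Y \<in> S then u Y else 0) + (if Y \<in> S' then u' Y else 0)" for Y
  have T: "finite (S \<union> S')" "S \<union> S' \<subseteq> Maxspec" using d d' unfolding weight_decomp_def by auto
  have "\<forall>Y\<in>S \<union> S'. e Y \<in> wsp act Y"
    using d d' wsp_add wsp_zero unfolding e_def weight_decomp_def by auto
  moreover have "v + w = (\<Sum>Y\<in>S \<union> S'. e Y)"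
    using weight_decomp_extend[OF d T(1) Un_upper1] weight_decomp_extend[OF d' T(1) Un_upper2]
    unfolding e_def sum.distrib by simp
  ultimately have "weight_decomp act (v + w) (S \<union> S') e" using T unfolding weight_decomp_def by blast
  then show ?thesis using weight_proj_eq[OF d, of X] weight_proj_eq[OF d', of X] weight_proj_eq[of _ _ e X]
    unfolding e_def by auto
qed

lemma weight_proj_zero: "weight_proj act X 0 = 0"
  using weight_proj_add[of X 0 0] by simp

lemma weight_proj_minus: "weight_proj act X (- v) = - weight_proj act X v"
  using weight_proj_add[of X v "- v"] weight_proj_zero by (metis add.right_inverse minus_unique)

lemma weight_proj_sum: "weight_proj act X (\<Sum>i\<in>F. f i) = (\<Sum>i\<in>F. weight_proj act X (f i))"
  by (induction F rule: infinite_finite_induct) (auto simp: weight_proj_zero weight_proj_add)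

lemma weight_proj_wsp:
  "Y \<in> Maxspec \<Longrightarrow> v \<in> wsp act Y \<Longrightarrow> weight_proj act X v = (if X = Y then v else 0)"
  using weight_proj_eq[of v "{Y}" "\<lambda>_. v"] unfolding weight_decomp_def by auto

lemma ex_nonzero_wsp:
  fixes v :: 'm
  assumes "v \<noteq> 0"
  shows "\<exists>Y\<in>Maxspec. wsp act Y \<noteq> {0}"
proof -
  obtain S u where d: "weight_decomp act v S u" using weight_decomp_exists by blast
  then have "\<exists>Y\<in>S. u Y \<noteq> 0" using assms unfolding weight_decomp_def by (metis sum.neutral)
  then show ?thesis using d unfolding weight_decomp_def by blast
qed

lemma weight_preimage_B_submodule:
  assumes "0 \<in> N" "\<And>v w. v \<in> N \<Longrightarrow> w \<in> N \<Longrightarrow> v + w \<in> N" "\<And>v. v \<in> N \<Longrightarrow> - v \<in> N"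
  shows "is_B_submodule \<sigma> H J act (weight_preimage \<sigma> H J act X N)"
  unfolding is_B_submodule_def
proof (intro conjI ballI)
  show "0 \<in> weight_preimage \<sigma> H J act X N"
    unfolding weight_preimage_def using act_zero[OF lmonom_in_BR] weight_proj_zero assms(1) by simp
next
  fix v w assume "v \<in> weight_preimage \<sigma> H J act X N" "w \<in> weight_preimage \<sigma> H J act X N"
  then show "v + w \<in> weight_preimage \<sigma> H J act X N"
    unfolding weight_preimage_def using act_add[OF lmonom_in_BR] weight_proj_add assms(2) by simp
next
  fix v assume "v \<in> weight_preimage \<sigma> H J act X N"
  then show "- v \<in> weight_preimage \<sigma> H J act X N"
    unfolding weight_preimage_def using act_minus[OF lmonom_in_BR] weight_proj_minus assms(3) by simp
next
  have sum_N: "(\<Sum>i\<in>F. u i) \<in> N" if "\<forall>i\<in>F. u i \<in> N" for F u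
    using that by (induction F rule: infinite_finite_induct) (auto simp: assms)
  fix g w assume g: "g \<in> BR \<sigma> H J" and w: "w \<in> weight_preimage \<sigma> H J act X N"
  define S where "S = {k. g k \<noteq> 0}"
  have fin: "finite S" and coeff: "\<And>k. g k \<in> Iseq \<sigma> H J k" using g unfolding BR_def S_def by auto
  have supp: "{k. g k \<noteq> 0} \<subseteq> S" unfolding S_def ..
  show "act g w \<in> weight_preimage \<sigma> H J act X N"
    unfolding weight_preimage_def
  proof (intro CollectI allI impI)
    fix c k assume c: "c \<in> Iseq \<sigma> H J k"
    have "act (lmonom c k) (act g w) = (\<Sum>l\<in>S. act (lmonom (c * spow \<sigma> k (g l)) (k + l)) w)"
      unfolding act_eq_sum_lmonom[OF fin g supp] act_sum[OF lmonom_in_BR[OF c]]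
      by (simp add: act_lmonom_lmonom[OF c coeff])
    moreover have "weight_proj act X (act (lmonom (c * spow \<sigma> k (g l)) (k + l)) w) \<in> N" for l
      using w Iseq_mult[OF aut c coeff] unfolding weight_preimage_def by blast
    ultimately show "weight_proj act X (act (lmonom c k) (act g w)) \<in> N"
      by (simp add: weight_proj_sum sum_N)
  qed
qed

lemma weight_preimage_wsp:
  assumes "X \<in> Maxspec" "v \<in> wsp act X" "v \<in> weight_preimage \<sigma> H J act X N"
  shows "v \<in> N"
proof -
  have "weight_proj act X (act (lmonom 1 0) v) \<in> N"
    using assms(3) unfolding weight_preimage_def by simp
  moreover have "act (lmonom 1 0) v = v" using act_lconst_1 by (simp add: lconst_eq_lmonom)
  ultimately show ?thesis using weight_proj_wsp[OF assms(1,2)] by simp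
qed

end

section \<open>The Veronese subalgebra \<open>\<Lambda>\<^sub>n\<close>\<close>

locale periodic_B_module = B_module \<sigma> H J act
  for \<sigma> :: "'r::comm_ring_1 \<Rightarrow> 'r" and H J and act :: "(int \<Rightarrow> 'r) \<Rightarrow> 'm::ab_group_add \<Rightarrow> 'm" +
  fixes n :: nat
  assumes period: "\<sigma> ^^ n = id"
begin

lemma act_Lam_wsp:
  assumes f: "f \<in> Lam \<sigma> H J n" and v: "v \<in> wsp act X"
  shows "act f v \<in> wsp act X"
proof -
  define S where "S = {k. f k \<noteq> 0}"
  have fB: "f \<in> BR \<sigma> H J" and dvd: "\<And>k. k \<in> S \<Longrightarrow> int n dvd k"
    using f unfolding Lam_def S_def by auto
  have fin: "finite S" and coeff: "\<And>k. f k \<in> Iseq \<sigma> H J k" using fB unfolding BR_def S_def by auto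
  have supp: "{k. f k \<noteq> 0} \<subseteq> S" unfolding S_def ..
  have "act (lmonom (f k) k) v \<in> wsp act X" if "k \<in> S" for k
    using act_lmonom_wsp[OF coeff[of k] v] spow_period_dvd[OF ring_aut_bij[OF aut] period dvd[OF that]]
    by simp
  then show ?thesis unfolding act_eq_sum_lmonom[OF fin fB supp] by (intro wsp_sum ballI)
qed

lemma LamQ_module: "is_LamQ_module \<sigma> H J n act X"
  unfolding is_LamQ_module_def
proof (intro conjI ballI)
  fix f v assume f: "f \<in> mLam \<sigma> H J n X" and v: "v \<in> wsp act X"
  obtain F :: "nat set" and c g where F: "finite F" "\<forall>i\<in>F. c i \<in> X \<and> g i \<in> Lam \<sigma> H J n"
    and f_eq: "f = (\<lambda>k. \<Sum>i\<in>F. lmult \<sigma> (lconst (c i)) (g i) k)"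
    using f unfolding mLam_def by blast
  have g: "g i \<in> BR \<sigma> H J" if "i \<in> F" for i using F that unfolding Lam_def by auto
  have "act (lmult \<sigma> (lconst (c i)) (g i)) v = 0" if "i \<in> F" for i
  proof -
    have "act (g i) v \<in> wsp act X" using act_Lam_wsp[OF _ v] F that by blast
    then show ?thesis using act_act[OF lconst_in_BR g[OF that]] F that unfolding wsp_def by auto
  qed
  moreover have "\<forall>i\<in>F. lmult \<sigma> (lconst (c i)) (g i) \<in> BR \<sigma> H J"
    using lmult_lconst_in_BR[OF g] by blast
  then have "act f v = (\<Sum>i\<in>F. act (lmult \<sigma> (lconst (c i)) (g i)) v)"
    using act_sum_fun[OF F(1)] unfolding f_eq by simp
  ultimately show "act f v = 0" by simp
qed (rule act_Lam_wsp)

text \<open>Since \<open>n\<close> divides every degree of \<open>f\<close>, \<open>\<sigma>\<^sup>k(x) = x\<close> there, so \<open>x t\<^sup>j f = \<sigma>\<^sup>j(f) x t\<^sup>j\<close>.\<close>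

lemma act_lmonom_Lam:
  assumes x: "x \<in> Iseq \<sigma> H J j" and f: "f \<in> Lam \<sigma> H J n"
  shows "act (lmonom x j) (act f v) = act (lmap (spow \<sigma> j) f) (act (lmonom x j) v)"
proof -
  define S where "S = {k. f k \<noteq> 0}"
  define g where "g = lmap (spow \<sigma> j) f"
  have fB: "f \<in> BR \<sigma> H J" and dvd: "\<And>k. k \<in> S \<Longrightarrow> int n dvd k"
    using f unfolding Lam_def S_def by auto
  have fin: "finite S" and coeff: "\<And>k. f k \<in> Iseq \<sigma> H J k" using fB unfolding BR_def S_def by auto
  have supp: "{k. f k \<noteq> 0} \<subseteq> S" unfolding S_def ..
  have gB: "g \<in> BR \<sigma> H J" and g_coeff: "\<And>k. g k \<in> Iseq \<sigma> H J k"
    using lmap_spow_in_Lam[OF aut period f] unfolding g_def Lam_def BR_def by auto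
  have g_supp: "{k. g k \<noteq> 0} \<subseteq> S"
    unfolding g_def S_def lmap_def using ring_aut_zero[OF ring_aut_spow[OF aut]] by auto
  have "act (lmonom x j) (act f v) = (\<Sum>k\<in>S. act (lmonom x j) (act (lmonom (f k) k) v))"
    unfolding act_eq_sum_lmonom[OF fin fB supp] by (rule act_sum[OF lmonom_in_BR[OF x]])
  also have "\<dots> = (\<Sum>k\<in>S. act (lmonom (g k) k) (act (lmonom x j) v))"
  proof (rule sum.cong[OF refl])
    fix k assume "k \<in> S"
    then have "spow \<sigma> k x = x"
      using spow_period_dvd[OF ring_aut_bij[OF aut] period dvd] by simp
    then show "act (lmonom x j) (act (lmonom (f k) k) v) = act (lmonom (g k) k) (act (lmonom x j) v)"
      using act_lmonom_lmonom[OF x coeff] act_lmonom_lmonom[OF g_coeff x]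
      by (simp add: g_def lmap_def mult.commute add.commute)
  qed
  also have "\<dots> = act g (act (lmonom x j) v)"
    using act_eq_sum_lmonom[OF fin gB g_supp] by simp
  finally show ?thesis unfolding g_def .
qed

end

section \<open>Orbits without breaks\<close>

locale break_free_orbit =
  fixes \<sigma> :: "'r::comm_ring_1 \<Rightarrow> 'r" and H J :: "'r set" and n :: nat and Orb :: "'r set set"
  assumes aut: "ring_aut \<sigma>" and period: "\<sigma> ^^ n = id"
    and orbit: "is_sigma_orbit \<sigma> Orb" and finite_orbit: "finite Orb" and card_orbit: "card Orb = n"
    and no_break: "\<forall>m\<in>Orb. \<not> is_break \<sigma> H J m"
begin

lemma bij_sigma: "bij \<sigma>"
  by (rule ring_aut_bij[OF aut])

lemma orbit_maximal: "X \<in> Orb \<Longrightarrow> is_maximal X"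
  using orbit maximal_image_ring_aut[OF ring_aut_spow[OF aut]]
  unfolding is_sigma_orbit_def Maxspec_def by auto

lemma orbit_Maxspec: "X \<in> Orb \<Longrightarrow> X \<in> Maxspec"
  using orbit_maximal unfolding Maxspec_def by simp

lemma orbit_prime: "X \<in> Orb \<Longrightarrow> is_prime_ideal X"
  using orbit_maximal maximal_imp_prime by blast

lemma spow_image_orbit: "X \<in> Orb \<Longrightarrow> spow \<sigma> j ` X \<in> Orb"
proof -
  assume "X \<in> Orb"
  then obtain m k where "Orb = {spow \<sigma> k ` m | k. True}" "X = spow \<sigma> k ` m"
    using orbit unfolding is_sigma_orbit_def by auto
  then show ?thesis using spow_image_image[OF bij_sigma, of j k m] by auto
qed

lemma orbit_transitive: "X \<in> Orb \<Longrightarrow> Y \<in> Orb \<Longrightarrow> \<exists>j. Y = spow \<sigma> j ` X"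
proof -
  assume "X \<in> Orb" "Y \<in> Orb"
  then obtain m k k' where "X = spow \<sigma> k ` m" "Y = spow \<sigma> k' ` m"
    using orbit unfolding is_sigma_orbit_def by auto
  then have "Y = spow \<sigma> (k' - k) ` X" using spow_image_image[OF bij_sigma] by simp
  then show ?thesis ..
qed

lemma period_pos: "n > 0"
proof -
  obtain m where "Orb = {spow \<sigma> k ` m | k. True}" using orbit unfolding is_sigma_orbit_def by auto
  then have "Orb \<noteq> {}" by blast
  then have "card Orb > 0" using finite_orbit by (simp add: card_gt_0_iff)
  then show ?thesis using card_orbit by simp
qed

text \<open>As \<open>|Orb| = n\<close>, the points \<open>\<sigma>\<^sup>k(X)\<close> for \<open>0 \<le> k < n\<close> are pairwise distinct.\<close>

lemma orbit_stabilizer_dvd: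
  assumes X: "X \<in> Orb" and fixed: "spow \<sigma> j ` X = X"
  shows "int n dvd j"
proof -
  define f where "f k = spow \<sigma> k ` X" for k
  have "Orb \<subseteq> f ` {0..<int n}"
  proof
    fix Y assume "Y \<in> Orb"
    then obtain k where "Y = f k" using orbit_transitive[OF X] unfolding f_def by blast
    then have "Y = f (k mod int n)" unfolding f_def using spow_mod[OF bij_sigma period] by metis
    then show "Y \<in> f ` {0..<int n}" using period_pos by simp
  qed
  moreover have "f ` {0..<int n} \<subseteq> Orb" unfolding f_def using spow_image_orbit[OF X] by auto
  ultimately have "card (f ` {0..<int n}) = card {0..<int n}" using card_orbit by simp
  then have "inj_on f {0..<int n}" by (rule eq_card_imp_inj_on[rotated]) simp
  moreover have "f (j mod int n) = f 0" unfolding f_def using fixed spow_mod[OF bij_sigma period, of j] by simp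
  ultimately have "j mod int n = 0" using period_pos unfolding inj_on_def by simp
  then show ?thesis by (simp add: dvd_eq_mod_eq_0)
qed

lemma orbit_not_supset_iprod: "X \<in> Orb \<Longrightarrow> \<not> iprod H J \<subseteq> X"
proof
  assume X: "X \<in> Orb" and sub: "iprod H J \<subseteq> X"
  define Y where "Y = spow \<sigma> (-1) ` X"
  have Y: "Y \<in> Orb" unfolding Y_def using spow_image_orbit[OF X] .
  have "\<sigma> ` Y = X" unfolding Y_def using spow_image_image[OF bij_sigma, of 1 "-1" X] by (simp add: spow_1)
  then have "is_break \<sigma> H J Y"
    using sub orbit_prime[OF X] orbit_Maxspec[OF Y] unfolding is_break_def SB_def by auto
  then show False using no_break Y by auto
qed

lemma spow_not_subset_orbit:
  assumes X: "X \<in> Orb"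
  shows "\<not> spow \<sigma> j ` H \<subseteq> X" "\<not> spow \<sigma> j ` J \<subseteq> X"
proof -
  have ideal: "is_ideal (spow \<sigma> (- j) ` X)"
    using orbit_maximal[OF spow_image_orbit[OF X]] unfolding is_maximal_def by blast
  have "\<not> iprod H J \<subseteq> spow \<sigma> (- j) ` X" by (rule orbit_not_supset_iprod[OF spow_image_orbit[OF X]])
  moreover have "spow \<sigma> j ` Z \<subseteq> X \<Longrightarrow> Z \<subseteq> spow \<sigma> (- j) ` X" for Z
    using image_mono[of "spow \<sigma> j ` Z" X "spow \<sigma> (- j)"] spow_image_image[OF bij_sigma, of "- j" j Z] by simp
  ultimately show "\<not> spow \<sigma> j ` H \<subseteq> X" "\<not> spow \<sigma> j ` J \<subseteq> X"
    using iprod_least[OF ideal, of H J] ideal_mult_left[OF ideal] ideal_mult_right[OF ideal]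
    by (meson subsetD)+
qed

lemma Iseq_not_subset_orbit:
  assumes X: "X \<in> Orb"
  shows "\<not> Iseq \<sigma> H J k \<subseteq> X"
  by (rule Iseq_not_subset_prime[OF orbit_prime[OF X]]) (use spow_not_subset_orbit[OF X] in blast)+

end

locale orbit_B_module =
  periodic_B_module \<sigma> H J act n + break_free_orbit \<sigma> H J n Orb
  for \<sigma> :: "'r::comm_ring_1 \<Rightarrow> 'r" and H J and act :: "(int \<Rightarrow> 'r) \<Rightarrow> 'm::ab_group_add \<Rightarrow> 'm"
    and n Orb
begin

lemma bij_betw_act_lmonom:
  assumes X: "X \<in> Orb" and x: "x \<in> Iseq \<sigma> H J (- i)" "x \<notin> X"
  shows "bij_betw (act (lmonom x (- i))) (wsp act (spow \<sigma> i ` X)) (wsp act X)"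
proof -
  define Y where "Y = spow \<sigma> i ` X"
  have Y: "Y \<in> Orb" unfolding Y_def by (rule spow_image_orbit[OF X])
  obtain y where y: "y \<in> Iseq \<sigma> H J i" "y \<notin> Y" using Iseq_not_subset_orbit[OF Y] by blast
  have X_eq: "spow \<sigma> (- i) ` Y = X" unfolding Y_def using spow_image_image[OF bij_sigma] by simp
  have mem: "spow \<sigma> k a \<in> spow \<sigma> k ` A \<longleftrightarrow> a \<in> A" for k a A
    by (rule inj_image_mem_iff[OF bij_is_inj[OF ring_aut_bij[OF ring_aut_spow[OF aut]]]])
  have "spow \<sigma> i x \<notin> Y" using x(2) mem unfolding Y_def by simp
  then have unit_Y: "y * spow \<sigma> i x \<notin> Y"
    using orbit_prime[OF Y] y(2) unfolding is_prime_ideal_def by blast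
  have "spow \<sigma> (- i) y \<notin> X" using y(2) mem[of "- i" y Y] X_eq by simp
  then have unit_X: "x * spow \<sigma> (- i) y \<notin> X"
    using orbit_prime[OF X] x(2) unfolding is_prime_ideal_def by blast
  have YY: "bij_betw (\<lambda>v. act (lmonom y i) (act (lmonom x (- i)) v)) (wsp act Y) (wsp act Y)"
    and XX: "bij_betw (\<lambda>v. act (lmonom x (- i)) (act (lmonom y i) v)) (wsp act X) (wsp act X)"
    using bij_betw_act_lconst[OF orbit_maximal[OF Y] unit_Y] bij_betw_act_lconst[OF orbit_maximal[OF X] unit_X]
      act_lmonom_lmonom[OF y(1) x(1)] act_lmonom_lmonom[OF x(1) y(1)]
    by (simp_all add: lconst_eq_lmonom)
  have into_X: "act (lmonom x (- i)) ` wsp act Y \<subseteq> wsp act X"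
    using act_lmonom_wsp[OF x(1)] X_eq by blast
  have into_Y: "act (lmonom y i) ` wsp act X \<subseteq> wsp act Y"
    using act_lmonom_wsp[OF y(1)] unfolding Y_def by blast
  show ?thesis unfolding Y_def[symmetric] by (rule bij_betw_if_comps_bij[OF into_X into_Y YY XX])
qed

lemma twisted_iso_exists:
  assumes X: "X \<in> Orb"
  shows "\<exists>\<phi>. twisted_iso \<sigma> H J n act X i \<phi>"
proof -
  obtain x where x: "x \<in> Iseq \<sigma> H J (- i)" "x \<notin> X" using Iseq_not_subset_orbit[OF X] by blast
  have "twisted_iso \<sigma> H J n act X i (act (lmonom x (- i)))"
    by (simp add: twisted_iso_def bij_betw_act_lmonom[OF X x] act_add[OF lmonom_in_BR[OF x(1)]]
        act_lmonom_Lam[OF x(1)])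
  then show ?thesis by blast
qed

end

locale simple_orbit_module =
  orbit_B_module \<sigma> H J act n Orb + weight_B_module \<sigma> H J act
  for \<sigma> :: "'r::comm_ring_1 \<Rightarrow> 'r" and H J and act :: "(int \<Rightarrow> 'r) \<Rightarrow> 'm::ab_group_add \<Rightarrow> 'm"
    and n Orb +
  assumes simple: "simple_B_module \<sigma> H J act" and supp_orbit: "supp act \<subseteq> Orb"
begin

lemma wsp_orbit_nonzero:
  assumes X: "X \<in> Orb"
  shows "wsp act X \<noteq> {0}"
proof
  assume X0: "wsp act X = {0}"
  have "(UNIV :: 'm set) \<noteq> {0}" using simple unfolding simple_B_module_def by blast
  then obtain v :: 'm where "v \<noteq> 0" by blast
  then obtain Y where Y: "Y \<in> Maxspec" "wsp act Y \<noteq> {0}" using ex_nonzero_wsp by blast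
  then have "Y \<in> Orb" using supp_orbit unfolding supp_def by blast
  then obtain j where j: "Y = spow \<sigma> j ` X" using orbit_transitive[OF X] by blast
  obtain x where x: "x \<in> Iseq \<sigma> H J (- j)" "x \<notin> X" using Iseq_not_subset_orbit[OF X] by blast
  have inj: "inj_on (act (lmonom x (- j))) (wsp act Y)"
    and into: "act (lmonom x (- j)) ` wsp act Y \<subseteq> wsp act X"
    using bij_betw_act_lmonom[OF X x] j unfolding bij_betw_def by auto
  have "z = 0" if z: "z \<in> wsp act Y" for z
  proof -
    have "act (lmonom x (- j)) z = 0" "act (lmonom x (- j)) 0 = 0"
      using into z wsp_zero[of Y] X0 by auto
    then show ?thesis using inj_onD[OF inj _ z wsp_zero] by simp
  qed
  then have "wsp act Y = {0}" using wsp_zero[of Y] by auto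
  then show False using Y(2) by simp
qed

lemma Lam_submodule_subset_weight_preimage:
  assumes X: "X \<in> Orb" and N: "is_Lam_submodule \<sigma> H J n act X N"
  shows "N \<subseteq> weight_preimage \<sigma> H J act X N"
  unfolding weight_preimage_def
proof (intro subsetI CollectI allI impI)
  fix w c k assume w: "w \<in> N" and c: "c \<in> Iseq \<sigma> H J k"
  have u: "act (lmonom c k) w \<in> wsp act (spow \<sigma> k ` X)"
    using act_lmonom_wsp[OF c] N w unfolding is_Lam_submodule_def by auto
  have proj: "weight_proj act X (act (lmonom c k) w) =
      (if X = spow \<sigma> k ` X then act (lmonom c k) w else 0)"
    by (rule weight_proj_wsp[OF orbit_Maxspec[OF spow_image_orbit[OF X]] u])
  show "weight_proj act X (act (lmonom c k) w) \<in> N"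
  proof (cases "X = spow \<sigma> k ` X")
    case True
    have "lmonom c k \<in> Lam \<sigma> H J n"
      by (rule lmonom_in_Lam[OF c orbit_stabilizer_dvd[OF X True[symmetric]]])
    then have "act (lmonom c k) w \<in> N" using N w unfolding is_Lam_submodule_def by blast
    then show ?thesis unfolding proj if_P[OF True] .
  next
    case False
    show ?thesis unfolding proj if_not_P[OF False] using N unfolding is_Lam_submodule_def by blast
  qed
qed

lemma Lam_submodule_trivial:
  assumes X: "X \<in> Orb" and N: "is_Lam_submodule \<sigma> H J n act X N"
  shows "N = {0} \<or> N = wsp act X"
proof -
  let ?P = "weight_preimage \<sigma> H J act X N"
  have N_sub: "N \<subseteq> ?P" by (rule Lam_submodule_subset_weight_preimage[OF X N])
  have N0: "0 \<in> N" and N_wsp: "N \<subseteq> wsp act X" using N unfolding is_Lam_submodule_def by auto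
  have "is_B_submodule \<sigma> H J act ?P"
    by (rule weight_preimage_B_submodule) (use N in \<open>auto simp: is_Lam_submodule_def\<close>)
  then consider "?P = {0}" | "?P = UNIV" using simple unfolding simple_B_module_def by blast
  then show ?thesis
  proof cases
    case 1
    then have "N = {0}" using N_sub N0 by blast
    then show ?thesis ..
  next
    case 2
    then have "wsp act X \<subseteq> N" using weight_preimage_wsp[OF orbit_Maxspec[OF X]] by blast
    then show ?thesis using N_wsp by blast
  qed
qed

lemma simple_LamQ_orbit: "X \<in> Orb \<Longrightarrow> simple_LamQ \<sigma> H J n act X"
  unfolding simple_LamQ_def using LamQ_module wsp_orbit_nonzero Lam_submodule_trivial by blast

end

theorem lemma3p13:
  fixes \<sigma> :: "'r::idom \<Rightarrow> 'r" and H J :: "'r set" and n :: nat and Orb :: "'r set set"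
    and act :: "(int \<Rightarrow> 'r) \<Rightarrow> 'm::ab_group_add \<Rightarrow> 'm"
  assumes "ring_aut \<sigma>" and "is_ideal H" and "is_ideal J"
    and "\<forall>k. Iseq \<sigma> H J k \<noteq> {0}"
    and "\<sigma> ^^ n = id"
    and "is_sigma_orbit \<sigma> Orb" and "finite Orb" and "card Orb = n"
    and "\<forall>m\<in>Orb. \<not> is_break \<sigma> H J m"
    and "simple_B_module \<sigma> H J act"
    and "is_weight_module act"
    and "supp act \<subseteq> Orb"
  shows "\<forall>m\<in>Orb. simple_LamQ \<sigma> H J n act m \<and>
           (\<forall>i::int. \<exists>\<phi>. twisted_iso \<sigma> H J n act m i \<phi>)"
proof -
  interpret simple_orbit_module \<sigma> H J act n Orb
    using assms by unfold_locales (auto simp: simple_B_module_def)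
  show ?thesis using simple_LamQ_orbit twisted_iso_exists by blast
qed

end
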